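(* Let $\mathscr{A}$ be a $C^*$-algebra with identity (not necessarily abelian) and let $\mathscr{X}$ be a right $\mathscr{A}$-module. Let $E, F\colon\mathscr{X}\to\mathscr{A}$ be $\mathscr{A}$-linear functions, and assume that $E$ is strong, i.e., there exists $w\in\mathscr{X}$ such that $E(w)$ is invertible in $\mathscr{A}$ ($E$ is not assumed bounded). Then the following are equivalent: (i) for all $x\in\mathscr{X}$, $E(x)=0$ implies $F(x)=0$; (ii) there exists $c\in\mathscr{A}$ such that $F(x)=cE(x)$ for all $x\in\mathscr{X}$.
   Context: A right $\mathscr{A}$-module $\mathscr{X}$ is a complex vector space with a right $\mathscr{A}$-action satisfying $(\alpha x)a=x(\alpha a)=\alpha(xa)$. A function $E\colon\mathscr{X}\to\mathscr{A}$ is $\mathscr{A}$-linear if it is additive and $E(\alpha x a)=\alpha E(x)a$ for all $x\in\mathscr{X}$, $\alpha\in\mathbb{C}$, $a\in\mathscr{A}$. *)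

theory Defs
  imports Complex_Main
begin

class unital_cstar_algebra = real_normed_algebra_1 + banach +
  fixes scaleC :: "complex \<Rightarrow> 'a \<Rightarrow> 'a" (infixr \<open>*\<^sub>C\<close> 75)
    and cstar :: "'a \<Rightarrow> 'a"
  assumes scaleC_add_right: "c *\<^sub>C (x + y) = c *\<^sub>C x + c *\<^sub>C y"
    and scaleC_add_left: "(b + c) *\<^sub>C x = b *\<^sub>C x + c *\<^sub>C x"
    and scaleC_scaleC: "b *\<^sub>C (c *\<^sub>C x) = (b * c) *\<^sub>C x"
    and scaleC_one: "1 *\<^sub>C x = x"
    and scaleC_of_real: "complex_of_real r *\<^sub>C x = r *\<^sub>R x"
    and scaleC_mult_left: "(c *\<^sub>C x) * y = c *\<^sub>C (x * y)"
    and scaleC_mult_right: "x * (c *\<^sub>C y) = c *\<^sub>C (x * y)"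
    and norm_scaleC: "norm (c *\<^sub>C x) = cmod c * norm x"
    and cstar_add: "cstar (x + y) = cstar x + cstar y"
    and cstar_scaleC: "cstar (c *\<^sub>C x) = cnj c *\<^sub>C cstar x"
    and cstar_mult: "cstar (x * y) = cstar y * cstar x"
    and cstar_cstar: "cstar (cstar x) = x"
    and cstar_identity: "norm (cstar x * x) = norm x * norm x"

definition invertible_elem :: "'a::ring_1 \<Rightarrow> bool" where
  "invertible_elem a \<longleftrightarrow> (\<exists>b. a * b = 1 \<and> b * a = 1)"

definition right_module ::
  "(complex \<Rightarrow> 'x::ab_group_add \<Rightarrow> 'x) \<Rightarrow> ('x \<Rightarrow> 'a::unital_cstar_algebra \<Rightarrow> 'x) \<Rightarrow> bool" where
  "right_module smul act \<longleftrightarrow>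
     (\<forall>c x y. smul c (x + y) = smul c x + smul c y) \<and>
     (\<forall>b c x. smul (b + c) x = smul b x + smul c x) \<and>
     (\<forall>b c x. smul b (smul c x) = smul (b * c) x) \<and>
     (\<forall>x. smul 1 x = x) \<and>
     (\<forall>x y a. act (x + y) a = act x a + act y a) \<and>
     (\<forall>x a b. act x (a + b) = act x a + act x b) \<and>
     (\<forall>x a b. act x (a * b) = act (act x a) b) \<and>
     (\<forall>c x a. act (smul c x) a = act x (c *\<^sub>C a) \<and> act x (c *\<^sub>C a) = smul c (act x a))"

definition A_linear ::
  "(complex \<Rightarrow> 'x::ab_group_add \<Rightarrow> 'x) \<Rightarrow> ('x \<Rightarrow> 'a::unital_cstar_algebra \<Rightarrow> 'x) \<Rightarrow> ('x \<Rightarrow> 'a) \<Rightarrow> bool" where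
  "A_linear smul act E \<longleftrightarrow>
     (\<forall>x y. E (x + y) = E x + E y) \<and>
     (\<forall>c x a. E (smul c (act x a)) = c *\<^sub>C (E x * a))"

definition strong :: "('x \<Rightarrow> 'a::unital_cstar_algebra) \<Rightarrow> bool" where
  "strong E \<longleftrightarrow> (\<exists>w. invertible_elem (E w))"

end

theory Submission
  imports Defs
begin

text \<open>If \<open>v\<close> is a right inverse of \<open>E w\<close>, then \<open>x - w (v E x)\<close> lies in the kernel of \<open>E\<close>
  for every \<open>x\<close>. When the kernel of \<open>E\<close> is contained in that of \<open>F\<close>, applying \<open>F\<close> to this
  element gives \<open>F x = (F w v) E x\<close>.\<close>

lemma A_linear_act:
  assumes "right_module smul act" and "A_linear smul act E"
  shows "E (act x a) = E x * a"
proof -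
  have "E (smul 1 (act x a)) = 1 *\<^sub>C (E x * a)"
    using assms(2) unfolding A_linear_def by blast
  moreover have "smul 1 (act x a) = act x a"
    using assms(1) unfolding right_module_def by blast
  ultimately show ?thesis by (simp add: scaleC_one)
qed

lemma A_linear_diff:
  assumes "A_linear smul act E"
  shows "E (x - y) = E x - E y"
proof -
  have "E x = E ((x - y) + y)" by simp
  also have "\<dots> = E (x - y) + E y"
    using assms unfolding A_linear_def by blast
  finally show ?thesis by (simp add: algebra_simps)
qed

lemma A_linear_factor_through_right_inverse:
  assumes module: "right_module smul act"
    and E: "A_linear smul act E" and F: "A_linear smul act F"
    and kernel: "\<And>y. E y = 0 \<Longrightarrow> F y = 0"
    and right_inverse: "E w * v = 1"
  shows "F x = (F w * v) * E x"
proof -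
  define y where "y = x - act w (v * E x)"
  have "E y = E x - E w * (v * E x)"
    unfolding y_def by (simp add: A_linear_diff[OF E] A_linear_act[OF module E])
  also have "\<dots> = 0"
    using right_inverse by (simp add: mult.assoc[symmetric])
  finally have "F y = 0" by (rule kernel)
  moreover have "F y = F x - F w * (v * E x)"
    unfolding y_def by (simp add: A_linear_diff[OF F] A_linear_act[OF module F])
  ultimately show ?thesis by (simp add: mult.assoc)
qed

theorem theorem4p4:
  fixes smul :: "complex \<Rightarrow> 'x::ab_group_add \<Rightarrow> 'x"
    and act :: "'x \<Rightarrow> 'a::unital_cstar_algebra \<Rightarrow> 'x"
    and E F :: "'x \<Rightarrow> 'a"
  assumes "right_module smul act"
    and "A_linear smul act E"
    and "A_linear smul act F"
    and "strong E"
  shows "(\<forall>x. E x = 0 \<longrightarrow> F x = 0) \<longleftrightarrow> (\<exists>c. \<forall>x. F x = c * E x)"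
proof
  assume "\<forall>x. E x = 0 \<longrightarrow> F x = 0"
  moreover obtain w v where "E w * v = 1"
    using assms(4) unfolding strong_def invertible_elem_def by blast
  ultimately have "\<forall>x. F x = (F w * v) * E x"
    using A_linear_factor_through_right_inverse[OF assms(1-3)] by blast
  then show "\<exists>c. \<forall>x. F x = c * E x" by blast
next
  assume "\<exists>c. \<forall>x. F x = c * E x"
  then show "\<forall>x. E x = 0 \<longrightarrow> F x = 0" by auto
qed

end
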